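(* Let $d\ge 2$ and let $V,W\in SU(d)$. The following are equivalent: (i) there exists a non-trivial tester $\mathcal{T}=(|\psi\rangle,\{|\chi_i\rangle\langle\chi_i|\}_{i=1}^d)$ such that $$H(\mathcal{T}|V)+H(\mathcal{T}|W)=0;$$ (ii) $V$ and $W$ are perfectly distinguishable, i.e. there exists a unit vector $|\phi\rangle\in\mathbb{C}^d$ with $\langle\phi|V^\dagger W|\phi\rangle=0$.
   Context: A tester is a pair $\mathcal{T}=(|\psi\rangle,\{|\chi_i\rangle\langle\chi_i|\}_{i=1}^d)$ consisting of a unit vector $|\psi\rangle\in\mathbb{C}^d$ (the input) and an orthonormal basis $\{|\chi_i\rangle\}_{i=1}^d$ of $\mathbb{C}^d$ (a projective measurement). For a unitary $U$, the entropy of testing $U$ with $\mathcal{T}$ is the Shannon entropy of the outcome distribution: $$H(\mathcal{T}|U)=-\sum_{i=1}^d|\langle\chi_i|U|\psi\rangle|^2\log|\langle\chi_i|U|\psi\rangle|^2,$$ with the convention $0\log 0=0$. For the pair $V,W$, a tester is called trivial if the two evolved inputs $V|\psi\rangle$ and $W|\psi\rangle$ are equal up to a global phase. In particular, this covers the situation where the input is sent by $V$ to a basis vector $|\chi_i\rangle$ that is an eigenvector of $WV^\dagger$. A tester is non-trivial otherwise. *)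

theory Defs
  imports "HOL-Analysis.Analysis"
begin

text \<open>Vectors in C^d are \<open>complex ^ 'n\<close> with d = CARD('n); d x d matrices are \<open>complex ^ 'n ^ 'n\<close>.\<close>

definition braket :: "complex ^ 'n \<Rightarrow> complex ^ 'n \<Rightarrow> complex" where
  "braket x y = (\<Sum>i\<in>UNIV. cnj (x $ i) * y $ i)"

definition adjoint_mat :: "complex ^ 'n ^ 'm \<Rightarrow> complex ^ 'm ^ 'n" where
  "adjoint_mat A = (\<chi> i j. cnj (A $ j $ i))"

definition unit_vec :: "complex ^ 'n \<Rightarrow> bool" where
  "unit_vec x \<longleftrightarrow> braket x x = 1"

definition unitary_mat :: "complex ^ 'n ^ 'n \<Rightarrow> bool" where
  "unitary_mat U \<longleftrightarrow> U ** adjoint_mat U = mat 1 \<and> adjoint_mat U ** U = mat 1"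

definition special_unitary :: "complex ^ 'n ^ 'n \<Rightarrow> bool" where
  "special_unitary U \<longleftrightarrow> unitary_mat U \<and> det U = 1"

definition orthonormal_basis :: "('n \<Rightarrow> complex ^ 'n) \<Rightarrow> bool" where
  "orthonormal_basis chi \<longleftrightarrow>
     (\<forall>i j. braket (chi i) (chi j) = (if i = j then 1 else 0))"

definition tester :: "complex ^ 'n \<Rightarrow> ('n \<Rightarrow> complex ^ 'n) \<Rightarrow> bool" where
  "tester psi chi \<longleftrightarrow> unit_vec psi \<and> orthonormal_basis chi"

definition xlogx :: "real \<Rightarrow> real" where
  "xlogx p = (if p = 0 then 0 else p * ln p)"

definition entropy_test :: "complex ^ 'n \<Rightarrow> ('n \<Rightarrow> complex ^ 'n) \<Rightarrow> complex ^ 'n ^ 'n \<Rightarrow> real" where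
  "entropy_test psi chi U =
     - (\<Sum>i\<in>UNIV. xlogx ((cmod (braket (chi i) (U *v psi)))\<^sup>2))"

definition trivial_tester ::
  "complex ^ 'n \<Rightarrow> ('n \<Rightarrow> complex ^ 'n) \<Rightarrow> complex ^ 'n ^ 'n \<Rightarrow> complex ^ 'n ^ 'n \<Rightarrow> bool" where
  "trivial_tester psi chi V W \<longleftrightarrow> (\<exists>c. cmod c = 1 \<and> W *v psi = c *s (V *v psi))"

end

theory Submission
  imports Defs
begin

text \<open>The entropy of a measurement vanishes exactly when the measured state is, up to a phase,
  one of the basis vectors. Hence a zero-entropy tester sends \<open>V\<psi>\<close> and \<open>W\<psi>\<close> to basis vectors
  \<open>\<chi>\<^sub>a\<close> and \<open>\<chi>\<^sub>b\<close>, non-triviality forces \<open>a \<noteq> b\<close>, and so \<open>V\<psi> \<bottom> W\<psi>\<close>. Conversely, if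
  \<open>V\<phi> \<bottom> W\<phi>\<close>, two Householder reflections carry the standard basis to an orthonormal basis
  containing \<open>V\<phi>\<close> and \<open>W\<phi>\<close>, and measuring \<open>\<phi>\<close> in that basis has zero entropy for both
  unitaries.\<close>

lemma braket_add_right: "braket x (y + z) = braket x y + braket x z"
  by (simp add: braket_def distrib_left sum.distrib)

lemma braket_diff_left: "braket (x - y) z = braket x z - braket y z"
  by (simp add: braket_def left_diff_distrib sum_subtractf)

lemma braket_diff_right: "braket x (y - z) = braket x y - braket x z"
  by (simp add: braket_def right_diff_distrib sum_subtractf)

lemma braket_smult_left: "braket (c *s x) y = cnj c * braket x y"
  by (simp add: braket_def sum_distrib_left algebra_simps)

lemma braket_smult_right: "braket x (c *s y) = c * braket x y"
  by (simp add: braket_def sum_distrib_left algebra_simps)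

lemma braket_zero_right [simp]: "braket x 0 = 0"
  by (simp add: braket_def)

lemma braket_sum_right: "braket x (\<Sum>i\<in>A. f i) = (\<Sum>i\<in>A. braket x (f i))"
  by (induction A rule: infinite_finite_induct) (auto simp: braket_add_right)

lemma cnj_braket: "cnj (braket x y) = braket y x"
  by (simp add: braket_def mult.commute)

lemma mult_cnj_self: "z * cnj z = (of_real (cmod z))\<^sup>2"
  by (metis complex_norm_square of_real_power)

lemma mult_cnj_self_unit: "cmod c = 1 \<Longrightarrow> c * cnj c = 1"
  by (simp add: mult_cnj_self)

lemma braket_self: "braket x x = of_real (\<Sum>i\<in>UNIV. (cmod (x $ i))\<^sup>2)"
  by (simp add: braket_def mult.commute[of "cnj _"] mult_cnj_self)

lemma braket_self_eq_0_iff: "braket x x = 0 \<longleftrightarrow> x = 0"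
proof
  assume "braket x x = 0"
  then have "(\<Sum>i\<in>UNIV. (cmod (x $ i))\<^sup>2) = 0"
    unfolding braket_self of_real_eq_0_iff .
  then show "x = 0"
    by (simp add: sum_nonneg_eq_0_iff vec_eq_iff)
qed (simp add: braket_def)

lemma braket_axis_left: "braket (axis i 1) x = x $ i"
proof -
  have "cnj (axis i 1 $ j) * x $ j = (if j = i then x $ j else 0)" for j
    by (simp add: axis_def)
  then show ?thesis
    by (simp add: braket_def)
qed

lemma braket_adjoint_mat: "braket x (A *v y) = braket (adjoint_mat A *v x) y"
proof -
  have "braket x (A *v y) = (\<Sum>i\<in>UNIV. \<Sum>j\<in>UNIV. cnj (x $ i) * (A $ i $ j * y $ j))"
    by (simp add: braket_def matrix_vector_mult_def sum_distrib_left)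
  also have "\<dots> = (\<Sum>j\<in>UNIV. \<Sum>i\<in>UNIV. cnj (x $ i) * (A $ i $ j * y $ j))"
    by (rule sum.swap)
  also have "\<dots> = braket (adjoint_mat A *v x) y"
    by (simp add: braket_def matrix_vector_mult_def adjoint_mat_def sum_distrib_left
        sum_distrib_right algebra_simps)
  finally show ?thesis .
qed

lemma braket_adjoint_mat_mult:
  "braket x ((adjoint_mat V ** W) *v x) = braket (V *v x) (W *v x)"
  by (simp add: braket_adjoint_mat adjoint_mat_def vec_eq_iff matrix_vector_mul_assoc[symmetric])

lemma unitary_mat_braket:
  assumes "unitary_mat U"
  shows "braket (U *v x) (U *v y) = braket x y"
  using assms by (simp add: braket_adjoint_mat matrix_vector_mul_assoc unitary_mat_def)

lemma unit_vec_unitary_mat: "unitary_mat U \<Longrightarrow> unit_vec x \<Longrightarrow> unit_vec (U *v x)"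
  by (simp add: unit_vec_def unitary_mat_braket)

lemma unit_vec_smult: "unit_vec x \<Longrightarrow> cmod c = 1 \<Longrightarrow> unit_vec (c *s x)"
  by (simp add: unit_vec_def braket_smult_left braket_smult_right mult_cnj_self_unit)

lemma unit_vec_axis: "unit_vec (axis i 1)"
  by (simp add: unit_vec_def braket_axis_left)

lemma ex_unimodular_mult_real: "\<exists>c. cmod c = 1 \<and> cnj (c * z) = c * z"
proof (cases "z = 0")
  case False
  then have "cnj z / cmod z * z = of_real (cmod z)"
    by (simp add: complex_norm_square[symmetric] power2_eq_square field_simps mult.commute)
  then show ?thesis
    using False by (intro exI[of _ "cnj z / cmod z"]) (simp add: norm_divide)
qed (intro exI[of _ 1], simp)

subsection \<open>Orthonormal bases\<close>

lemma orthonormal_basis_axis: "orthonormal_basis (\<lambda>i. axis i 1)"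
  unfolding orthonormal_basis_def braket_axis_left by (simp add: axis_def)

lemma orthonormal_basis_comp:
  assumes "\<And>x y. braket (f x) (f y) = braket x y" and "orthonormal_basis chi"
  shows "orthonormal_basis (f \<circ> chi)"
  using assms by (simp add: orthonormal_basis_def)

lemma orthonormal_basis_smult:
  assumes "\<And>i. cmod (c i) = 1" and "orthonormal_basis chi"
  shows "orthonormal_basis (\<lambda>i. c i *s chi i)"
  using assms by (simp add: orthonormal_basis_def braket_smult_left braket_smult_right mult_cnj_self_unit)

lemma orthonormal_basis_expansion:
  fixes chi :: "'n \<Rightarrow> complex ^ 'n"
  assumes "orthonormal_basis chi"
  shows "x = (\<Sum>i\<in>UNIV. braket (chi i) x *s chi i)"
proof -
  define M :: "complex^'n^'n" where "M = (\<chi> i j. cnj (chi i $ j))"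
  have "M ** adjoint_mat M = mat 1"
    using assms unfolding orthonormal_basis_def
    by (simp add: M_def adjoint_mat_def matrix_matrix_mult_def mat_def vec_eq_iff braket_def)
  then have "adjoint_mat M ** M = mat 1"
    by (simp add: matrix_left_right_inverse)
  then have "x = adjoint_mat M *v (M *v x)"
    by (simp add: matrix_vector_mul_assoc)
  also have "\<dots> = (\<Sum>i\<in>UNIV. braket (chi i) x *s chi i)"
    by (simp add: M_def adjoint_mat_def matrix_vector_mult_def vec_eq_iff braket_def
        sum_component mult.commute)
  finally show ?thesis .
qed

lemma parseval:
  assumes "orthonormal_basis chi"
  shows "braket x x = of_real (\<Sum>i\<in>UNIV. (cmod (braket (chi i) x))\<^sup>2)"
proof -
  have "braket x x = braket x (\<Sum>i\<in>UNIV. braket (chi i) x *s chi i)"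
    using orthonormal_basis_expansion[OF assms] by metis
  also have "\<dots> = (\<Sum>i\<in>UNIV. braket (chi i) x * cnj (braket (chi i) x))"
    by (simp add: braket_sum_right braket_smult_right cnj_braket)
  also have "\<dots> = of_real (\<Sum>i\<in>UNIV. (cmod (braket (chi i) x))\<^sup>2)"
    by (simp add: mult_cnj_self)
  finally show ?thesis .
qed

subsection \<open>Householder reflections\<close>

text \<open>For \<open>v = 0\<close> the division by zero makes this the identity.\<close>
definition householder :: "complex ^ 'n \<Rightarrow> complex ^ 'n \<Rightarrow> complex ^ 'n" where
  "householder v x = x - (2 * braket v x / braket v v) *s v"

lemma braket_householder: "braket (householder v x) (householder v y) = braket x y"
proof (cases "v = 0")
  case False
  then have vv: "braket v v \<noteq> 0" "cnj (braket v v) = braket v v"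
    by (simp_all add: braket_self_eq_0_iff cnj_braket)
  have "braket x v = cnj (braket v x)"
    by (simp add: cnj_braket)
  with vv show ?thesis
    unfolding householder_def braket_diff_left braket_diff_right braket_smult_left braket_smult_right
    by (simp add: field_simps)
qed (simp add: householder_def)

lemma householder_householder: "householder v (householder v x) = x"
proof (cases "v = 0")
  case False
  then have "braket v (householder v x) = - braket v x"
    by (simp add: householder_def braket_diff_right braket_smult_right braket_self_eq_0_iff)
  with False show ?thesis
    by (simp add: householder_def vec_eq_iff field_simps braket_self_eq_0_iff)
qed (simp add: householder_def)

lemma householder_orthogonal: "braket v x = 0 \<Longrightarrow> householder v x = x"
  by (simp add: householder_def)

lemma householder_smult: "householder v (c *s x) = c *s householder v x"
  by (simp add: householder_def braket_smult_right vec_eq_iff algebra_simps)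

lemma householder_diff_unit_vec:
  assumes "unit_vec x" "unit_vec y" and "cnj (braket x y) = braket x y"
  shows "householder (x - y) x = y"
proof (cases "x = y")
  case False
  define r where "r = braket x y"
  have "braket y x = r" "braket x x = 1" "braket y y = 1"
    using assms by (auto simp: r_def unit_vec_def cnj_braket)
  then have "braket (x - y) x = 1 - r" "braket (x - y) (x - y) = 2 * (1 - r)"
    by (simp_all add: braket_diff_left braket_diff_right r_def)
  moreover have "braket (x - y) (x - y) \<noteq> 0"
    using False by (simp add: braket_self_eq_0_iff)
  ultimately show ?thesis
    by (simp add: householder_def)
qed (simp add: householder_def)

text \<open>A reflection maps \<open>x\<close> to \<open>y\<close> exactly when \<open>\<langle>x, y\<rangle>\<close> is real, so in general only up to a phase.\<close>
lemma householder_unit_vec_phase: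
  assumes "unit_vec x" "unit_vec y"
  obtains c where "cmod c = 1" "householder (x - c *s y) x = c *s y"
proof -
  obtain c where c: "cmod c = 1" "cnj (c * braket x y) = c * braket x y"
    using ex_unimodular_mult_real by blast
  have "householder (x - c *s y) x = c *s y"
    using c by (intro householder_diff_unit_vec assms unit_vec_smult) (simp_all add: braket_smult_right)
  with c(1) show ?thesis
    using that by blast
qed

lemma orthonormal_basis_extend_pair:
  fixes u w :: "complex ^ 'n"
  assumes "a \<noteq> b" and "unit_vec u" "unit_vec w" and "braket u w = 0"
  obtains chi where "orthonormal_basis chi" "chi a = u" "chi b = w"
proof -
  let ?e = "\<lambda>i. axis i 1 :: complex ^ 'n"
  obtain c1 where c1: "cmod c1 = 1" "householder (?e a - c1 *s u) (?e a) = c1 *s u"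
    using householder_unit_vec_phase[OF unit_vec_axis assms(2)] .
  define H1 where "H1 = householder (?e a - c1 *s u)"
  define w' where "w' = H1 w"
  have H1ea: "H1 (?e a) = c1 *s u" and H1w': "H1 w' = w"
    using c1 by (simp_all add: w'_def H1_def householder_householder)
  have "braket (?e a) w' = braket (H1 (?e a)) (H1 w')"
    by (simp add: H1_def braket_householder)
  also have "\<dots> = 0"
    using assms(4) by (simp add: H1ea H1w' braket_smult_left)
  finally have ea_w': "braket (?e a) w' = 0" .
  have "unit_vec w'"
    using assms(3) by (simp add: unit_vec_def w'_def H1_def braket_householder)
  then obtain c2 where c2: "cmod c2 = 1" "householder (?e b - c2 *s w') (?e b) = c2 *s w'"
    using householder_unit_vec_phase[OF unit_vec_axis] by blast
  define H2 where "H2 = householder (?e b - c2 *s w')"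
  have "braket (?e b - c2 *s w') (?e a) = 0"
    using assms(1) ea_w' cnj_braket[of w' "?e a"]
    by (simp add: braket_diff_left braket_smult_left braket_axis_left) (simp add: axis_def)
  then have H2ea: "H2 (?e a) = ?e a"
    by (simp add: H2_def householder_orthogonal)
  have H1H2eb: "H1 (H2 (?e b)) = c2 *s w"
    using c2 H1w' by (simp add: H1_def H2_def householder_smult)
  define c where "c i = (if i = a then cnj c1 else if i = b then cnj c2 else 1)" for i
  define chi where "chi i = c i *s (H1 \<circ> H2 \<circ> ?e) i" for i
  have "orthonormal_basis chi"
    unfolding chi_def
    by (intro orthonormal_basis_smult orthonormal_basis_comp orthonormal_basis_axis)
      (use c1 c2 in \<open>simp_all add: c_def H1_def H2_def braket_householder\<close>)
  moreover have "chi a = u" "chi b = w"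
    using assms(1) c1 c2 H1ea H2ea H1H2eb
    by (simp_all add: chi_def c_def vector_smult_assoc mult.commute[of "cnj _"] mult_cnj_self_unit)
  ultimately show ?thesis
    using that by blast
qed

subsection \<open>Entropy of a measurement\<close>

lemma xlogx_eq_0_iff: "0 \<le> p \<Longrightarrow> xlogx p = 0 \<longleftrightarrow> p = 0 \<or> p = 1"
  by (auto simp: xlogx_def)

lemma xlogx_nonpos: "0 \<le> p \<Longrightarrow> p \<le> 1 \<Longrightarrow> xlogx p \<le> 0"
  by (simp add: xlogx_def mult_nonneg_nonpos)

lemma finite_if_sum_eq_1: "sum p A = (1 :: 'a :: {comm_monoid_add, zero_neq_one}) \<Longrightarrow> finite A"
  using sum.infinite by fastforce

lemma le_1_if_sum_eq_1:
  fixes p :: "'a \<Rightarrow> real"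
  assumes "\<And>i. i \<in> A \<Longrightarrow> 0 \<le> p i" and "sum p A = 1" and "i \<in> A"
  shows "p i \<le> 1"
proof -
  have "p i \<le> sum p A"
    using assms by (intro member_le_sum finite_if_sum_eq_1[OF assms(2)]) auto
  with assms(2) show ?thesis
    by simp
qed

lemma sum_xlogx_nonpos:
  assumes "\<And>i. i \<in> A \<Longrightarrow> 0 \<le> p i" and "sum p A = 1"
  shows "(\<Sum>i\<in>A. xlogx (p i)) \<le> 0"
  using assms by (intro sum_nonpos xlogx_nonpos le_1_if_sum_eq_1)

lemma sum_xlogx_eq_0_iff:
  assumes nonneg: "\<And>i. i \<in> A \<Longrightarrow> 0 \<le> p i" and sum_1: "sum p A = 1"
  shows "(\<Sum>i\<in>A. xlogx (p i)) = 0 \<longleftrightarrow> (\<exists>a\<in>A. \<forall>i\<in>A. p i = (if i = a then 1 else 0))"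
proof -
  have fin: "finite A"
    using finite_if_sum_eq_1[OF sum_1] .
  have "(\<Sum>i\<in>A. xlogx (p i)) = 0 \<longleftrightarrow> (\<forall>i\<in>A. xlogx (p i) = 0)"
    using sum_nonneg_eq_0_iff[OF fin, of "\<lambda>i. - xlogx (p i)"]
      xlogx_nonpos[OF nonneg le_1_if_sum_eq_1[OF nonneg sum_1]]
    by (simp add: sum_negf)
  also have "\<dots> \<longleftrightarrow> (\<forall>i\<in>A. p i = 0 \<or> p i = 1)"
    using nonneg xlogx_eq_0_iff by blast
  also have "\<dots> \<longleftrightarrow> (\<exists>a\<in>A. \<forall>i\<in>A. p i = (if i = a then 1 else 0))"
  proof
    assume zero_one: "\<forall>i\<in>A. p i = 0 \<or> p i = 1"
    have "\<not> (\<forall>i\<in>A. p i = 0)"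
      using sum_1 sum.neutral by force
    with zero_one obtain a where a: "a \<in> A" "p a = 1"
      by blast
    then have "sum p (A - {a}) = 0"
      using sum.remove[OF fin a(1), of p] sum_1 by simp
    then have "\<forall>i\<in>A - {a}. p i = 0"
      using fin nonneg sum_nonneg_eq_0_iff[of "A - {a}" p] by blast
    with a show "\<exists>a\<in>A. \<forall>i\<in>A. p i = (if i = a then 1 else 0)"
      by auto
  qed auto
  finally show ?thesis .
qed

lemma sum_outcome_probabilities_eq_1:
  assumes "orthonormal_basis chi" and "unit_vec x"
  shows "(\<Sum>i\<in>UNIV. (cmod (braket (chi i) x))\<^sup>2) = 1"
  using parseval[OF assms(1), of x] assms(2) unfolding unit_vec_def by (metis of_real_eq_1_iff)

lemma entropy_test_nonneg:
  assumes "orthonormal_basis chi" and "unit_vec (U *v psi)"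
  shows "0 \<le> entropy_test psi chi U"
  using sum_xlogx_nonpos[OF _ sum_outcome_probabilities_eq_1[OF assms]]
  by (simp add: entropy_test_def)

lemma entropy_test_eq_0_iff:
  assumes ob: "orthonormal_basis chi" and "unit_vec (U *v psi)"
  shows "entropy_test psi chi U = 0 \<longleftrightarrow> (\<exists>a c. cmod c = 1 \<and> U *v psi = c *s chi a)"
proof -
  define x where "x = U *v psi"
  have "entropy_test psi chi U = 0 \<longleftrightarrow>
      (\<exists>a. \<forall>i. (cmod (braket (chi i) x))\<^sup>2 = (if i = a then 1 else 0))"
    using sum_xlogx_eq_0_iff[OF _ sum_outcome_probabilities_eq_1[OF assms]]
    unfolding entropy_test_def x_def[symmetric] by simp
  also have "\<dots> \<longleftrightarrow> (\<exists>a c. cmod c = 1 \<and> x = c *s chi a)"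
  proof
    assume "\<exists>a. \<forall>i. (cmod (braket (chi i) x))\<^sup>2 = (if i = a then 1 else 0)"
    then obtain a where prob: "\<And>i. (cmod (braket (chi i) x))\<^sup>2 = (if i = a then 1 else 0)"
      by blast
    have norm: "cmod (braket (chi a) x) = 1"
      using prob[of a] norm_ge_zero[of "braket (chi a) x"] by (auto simp: power2_eq_1_iff)
    have zero: "braket (chi i) x = 0" if "i \<noteq> a" for i
      using prob[of i] that by simp
    have "x = (\<Sum>i\<in>UNIV. braket (chi i) x *s chi i)"
      using orthonormal_basis_expansion[OF ob] .
    also have "\<dots> = braket (chi a) x *s chi a"
      by (subst sum.remove[of UNIV a]) (auto simp: zero intro!: sum.neutral)
    finally show "\<exists>a c. cmod c = 1 \<and> x = c *s chi a"
      using norm by blast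
  next
    assume "\<exists>a c. cmod c = 1 \<and> x = c *s chi a"
    then obtain a c where "cmod c = 1" "x = c *s chi a"
      by blast
    with ob show "\<exists>a. \<forall>i. (cmod (braket (chi i) x))\<^sup>2 = (if i = a then 1 else 0)"
      by (auto simp: orthonormal_basis_def braket_smult_right norm_mult)
  qed
  finally show ?thesis
    by (simp add: x_def)
qed

subsection \<open>Zero-entropy testers\<close>

lemma orthogonal_if_zero_entropy_nontrivial_tester:
  assumes "unitary_mat V" "unitary_mat W" and "tester psi chi" "\<not> trivial_tester psi chi V W"
    and "entropy_test psi chi V + entropy_test psi chi W = 0"
  shows "braket (V *v psi) (W *v psi) = 0"
proof -
  have ob: "orthonormal_basis chi" and unit: "unit_vec (V *v psi)" "unit_vec (W *v psi)"
    using assms(1-3) by (auto simp: tester_def unit_vec_unitary_mat)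
  then have "entropy_test psi chi V = 0" "entropy_test psi chi W = 0"
    using assms(5) entropy_test_nonneg[OF ob unit(1)] entropy_test_nonneg[OF ob unit(2)]
    by linarith+
  then obtain a b c d where c: "cmod c = 1" "V *v psi = c *s chi a"
    and d: "cmod d = 1" "W *v psi = d *s chi b"
    using entropy_test_eq_0_iff[OF ob unit(1)] entropy_test_eq_0_iff[OF ob unit(2)] by blast
  have "a \<noteq> b"
  proof
    assume "a = b"
    with c d have "W *v psi = (d / c) *s (V *v psi)"
      by (auto simp: vector_smult_assoc)
    moreover have "cmod (d / c) = 1"
      using c(1) d(1) by (simp add: norm_divide)
    ultimately show False
      using assms(4) unfolding trivial_tester_def by blast
  qed
  with ob c d show ?thesis
    by (simp add: orthonormal_basis_def braket_smult_left braket_smult_right)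
qed

lemma zero_entropy_nontrivial_tester_if_orthogonal:
  assumes "CARD('n) \<ge> 2" and "unitary_mat V" "unitary_mat W"
    and "unit_vec phi" "braket (V *v phi) (W *v phi) = 0"
  obtains chi :: "'n \<Rightarrow> complex ^ 'n" where "tester phi chi" "\<not> trivial_tester phi chi V W"
    "entropy_test phi chi V = 0" "entropy_test phi chi W = 0"
proof -
  obtain T :: "'n set" where "card T = 2"
    using obtain_subset_with_card_n[OF assms(1)] by metis
  then obtain a b :: 'n where "a \<noteq> b"
    by (auto simp: card_2_iff)
  moreover have unit: "unit_vec (V *v phi)" "unit_vec (W *v phi)"
    using assms(2-4) by (simp_all add: unit_vec_unitary_mat)
  ultimately obtain chi where ob: "orthonormal_basis chi"
    and chi: "chi a = V *v phi" "chi b = W *v phi"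
    using orthonormal_basis_extend_pair[OF _ unit assms(5)] by blast
  have "entropy_test phi chi V = 0"
    unfolding entropy_test_eq_0_iff[OF ob unit(1)] using chi(1)
    by (intro exI[of _ a] exI[of _ 1]) simp
  moreover have "entropy_test phi chi W = 0"
    unfolding entropy_test_eq_0_iff[OF ob unit(2)] using chi(2)
    by (intro exI[of _ b] exI[of _ 1]) simp
  moreover have "\<not> trivial_tester phi chi V W"
    using assms(5) unit(1) by (auto simp: trivial_tester_def braket_smult_right unit_vec_def)
  ultimately show ?thesis
    using that assms(4) ob by (simp add: tester_def)
qed

theorem proposition1:
  fixes V W :: "complex ^ 'n ^ 'n"
  assumes "CARD('n) \<ge> 2"
    and "special_unitary V" and "special_unitary W"
  shows "(\<exists>psi chi. tester psi chi \<and> \<not> trivial_tester psi chi V W \<and>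
            entropy_test psi chi V + entropy_test psi chi W = 0)
         \<longleftrightarrow> (\<exists>phi. unit_vec phi \<and> braket phi ((adjoint_mat V ** W) *v phi) = 0)"
proof -
  have unitary: "unitary_mat V" "unitary_mat W"
    using assms(2,3) by (simp_all add: special_unitary_def)
  show ?thesis
    unfolding braket_adjoint_mat_mult
  proof
    assume "\<exists>psi chi. tester psi chi \<and> \<not> trivial_tester psi chi V W \<and>
              entropy_test psi chi V + entropy_test psi chi W = 0"
    then show "\<exists>phi. unit_vec phi \<and> braket (V *v phi) (W *v phi) = 0"
      using orthogonal_if_zero_entropy_nontrivial_tester[OF unitary] by (auto simp: tester_def)
  next
    assume "\<exists>phi. unit_vec phi \<and> braket (V *v phi) (W *v phi) = 0"
    then obtain phi where "unit_vec phi" "braket (V *v phi) (W *v phi) = 0"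
      by blast
    then obtain chi where "tester phi chi" "\<not> trivial_tester phi chi V W"
      "entropy_test phi chi V = 0" "entropy_test phi chi W = 0"
      using zero_entropy_nontrivial_tester_if_orthogonal[OF assms(1) unitary] by blast
    then show "\<exists>psi chi. tester psi chi \<and> \<not> trivial_tester psi chi V W \<and>
                entropy_test psi chi V + entropy_test psi chi W = 0"
      by (intro exI[of _ phi] exI[of _ chi]) simp
  qed
qed

end
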